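(* Let $E$ be a set and $T$ a set of clauses $X\Rightarrow Y$ ($X,Y\subseteq E$) that is rooted, i.e. no clause of the form $\emptyset\Rightarrow Y$ is a logical consequence of $T$. Define the Petri net $\mathcal{N}(T)$ as follows: its transitions are the elements of $E$; for each $e\in E$ there is a place containing one initial token, with no incoming arcs and a single outgoing arc (of weight 1) to $e$; and for each clause $(X\Rightarrow Y)\in T$ with $X$ finite there is a place with an arc of weight 1 to each transition in $X$, an arc of weight 1 from each transition in $Y$, and $|X|-1$ initial tokens. Then the configurations of $\mathcal{N}(T)$ are exactly the finite models of $T$ (multisets with values in $\{0,1\}$ being identified with sets).
   Context: A clause $X\Rightarrow Y$ stands for $\bigwedge X\Rightarrow\bigvee Y$; a model of $T$ is a set $m\subseteq E$ such that for every clause $X\Rightarrow Y$ in $T$, $X\subseteq m$ implies $Y\cap m\ne\emptyset$; a clause is a logical consequence of $T$ if it holds in every model of $T$. A Petri net is $(S,T,F,I)$ with disjoint sets $S$ (places) and $T$ (transitions), flow function $F:(S\times T\cup T\times S)\to\mathbb{N}$ and initial marking $I:S\to\mathbb{N}$. For a finite multiset $X:T\to\mathbb{N}$ put ${}^\bullet X(s)=\sum_t F(s,t)X(t)$ and $X^\bullet(s)=\sum_t X(t)F(t,s)$. A configuration of the net is a finite multiset $X$ of transitions such that $I-{}^\bullet X+X^\bullet\ge 0$ pointwise. *)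

theory Defs
  imports Main "HOL-Library.Multiset"
begin

type_synonym 'a clause = "'a set \<times> 'a set"

definition is_model :: "'a set \<Rightarrow> 'a clause set \<Rightarrow> 'a set \<Rightarrow> bool" where
  "is_model E T m \<longleftrightarrow> m \<subseteq> E \<and>
     (\<forall>(X, Y) \<in> T. X \<subseteq> m \<longrightarrow> Y \<inter> m \<noteq> {})"

definition logical_consequence :: "'a set \<Rightarrow> 'a clause set \<Rightarrow> 'a clause \<Rightarrow> bool" where
  "logical_consequence E T c \<longleftrightarrow>
     (\<forall>m. is_model E T m \<longrightarrow> (fst c \<subseteq> m \<longrightarrow> snd c \<inter> m \<noteq> {}))"

definition rooted :: "'a set \<Rightarrow> 'a clause set \<Rightarrow> bool" where
  "rooted E T \<longleftrightarrow> (\<forall>Y. Y \<subseteq> E \<longrightarrow> \<not> logical_consequence E T ({}, Y))"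

text \<open>Places and transitions live in different types, hence are
  disjoint. The flow function F on S\<times>T \<union> T\<times>S is split into flow_st (F(s,t)) and
  flow_ts (F(t,s)).\<close>
record ('s, 't) petri_net =
  places :: "'s set"
  transitions :: "'t set"
  flow_st :: "'s \<Rightarrow> 't \<Rightarrow> nat"
  flow_ts :: "'t \<Rightarrow> 's \<Rightarrow> nat"
  init :: "'s \<Rightarrow> nat"

definition preset_ms :: "('s, 't) petri_net \<Rightarrow> 't multiset \<Rightarrow> 's \<Rightarrow> nat" where
  "preset_ms N X s = (\<Sum>t\<in>set_mset X. flow_st N s t * count X t)"

definition postset_ms :: "('s, 't) petri_net \<Rightarrow> 't multiset \<Rightarrow> 's \<Rightarrow> nat" where
  "postset_ms N X s = (\<Sum>t\<in>set_mset X. count X t * flow_ts N t s)"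

definition is_configuration :: "('s, 't) petri_net \<Rightarrow> 't multiset \<Rightarrow> bool" where
  "is_configuration N X \<longleftrightarrow> set_mset X \<subseteq> transitions N \<and>
     (\<forall>s \<in> places N. int (init N s) - int (preset_ms N X s) + int (postset_ms N X s) \<ge> 0)"

datatype 'a place = ElemPlace 'a | ClausePlace "'a clause"

definition net_of :: "'a set \<Rightarrow> 'a clause set \<Rightarrow> ('a place, 'a) petri_net" where
  "net_of E T = \<lparr>
     places = ElemPlace ` E \<union> ClausePlace ` {c \<in> T. finite (fst c)},
     transitions = E,
     flow_st = (\<lambda>s t. case s of
                   ElemPlace e \<Rightarrow> (if t = e then 1 else 0)
                 | ClausePlace (X, Y) \<Rightarrow> (if t \<in> X then 1 else 0)),
     flow_ts = (\<lambda>t s. case s of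
                   ElemPlace e \<Rightarrow> 0
                 | ClausePlace (X, Y) \<Rightarrow> (if t \<in> Y then 1 else 0)),
     init = (\<lambda>s. case s of
                   ElemPlace e \<Rightarrow> 1
                 | ClausePlace (X, Y) \<Rightarrow> card X - 1) \<rparr>"

end

theory Submission
  imports Defs
begin

text \<open>The place of an element e forces every transition to fire at most once, so configurations
  are sets. For a set m, the clause place of (X, Y) holds card X - 1 - card (m \<inter> X) +
  card (m \<inter> Y) tokens after firing m; this is negative exactly when X \<subseteq> m and
  Y \<inter> m = {}, provided X \<noteq> {}. Rootedness rules out clauses with empty premise.\<close>

lemma net_of_components:
  "places (net_of E T) = ElemPlace ` E \<union> ClausePlace ` {c \<in> T. finite (fst c)}"
  "transitions (net_of E T) = E"
  "init (net_of E T) (ElemPlace e) = 1"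
  "init (net_of E T) (ClausePlace (X, Y)) = card X - 1"
  by (simp_all add: net_of_def)

lemma preset_net_of_ElemPlace: "preset_ms (net_of E T) M (ElemPlace e) = count M e"
proof -
  have "preset_ms (net_of E T) M (ElemPlace e) = (\<Sum>t\<in>set_mset M. if t = e then count M e else 0)"
    unfolding preset_ms_def by (rule sum.cong) (auto simp: net_of_def)
  also have "\<dots> = count M e"
    by (simp add: sum.delta not_in_iff)
  finally show ?thesis .
qed

lemma postset_net_of_ElemPlace: "postset_ms (net_of E T) M (ElemPlace e) = 0"
  by (simp add: postset_ms_def net_of_def)

lemma sum_indicator_eq_card_Int:
  "finite m \<Longrightarrow> (\<Sum>t\<in>m. if t \<in> X then 1 else 0 :: nat) = card (m \<inter> X)"
  by (simp add: sum.If_cases Int_def)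

lemma
  assumes "finite m"
  shows preset_net_of_ClausePlace_mset_set:
      "preset_ms (net_of E T) (mset_set m) (ClausePlace (X, Y)) = card (m \<inter> X)"
    and postset_net_of_ClausePlace_mset_set:
      "postset_ms (net_of E T) (mset_set m) (ClausePlace (X, Y)) = card (m \<inter> Y)"
  using assms
  by (simp_all add: preset_ms_def postset_ms_def net_of_def count_mset_set
      sum_indicator_eq_card_Int[OF assms, symmetric] cong: sum.cong)

lemma is_configuration_net_of_iff:
  "is_configuration (net_of E T) M \<longleftrightarrow> set_mset M \<subseteq> E \<and> (\<forall>e \<in> E. count M e \<le> 1) \<and>
    (\<forall>(X, Y) \<in> T. finite X \<longrightarrow>
       0 \<le> int (card X - 1) - int (preset_ms (net_of E T) M (ClausePlace (X, Y)))
         + int (postset_ms (net_of E T) M (ClausePlace (X, Y))))"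
  unfolding is_configuration_def net_of_components ball_Un Ball_image_comp
  by (auto simp: net_of_components preset_net_of_ElemPlace postset_net_of_ElemPlace)

lemma configuration_net_of_eq_mset_set:
  assumes "is_configuration (net_of E T) M"
  shows "M = mset_set (set_mset M)"
proof (rule multiset_eqI)
  fix t
  show "count M t = count (mset_set (set_mset M)) t"
  proof (cases "t \<in># M")
    case True
    then have "count M t \<le> 1"
      using assms by (auto simp: is_configuration_net_of_iff)
    with True show ?thesis by (auto simp: le_Suc_eq count_eq_zero_iff)
  qed (simp add: not_in_iff)
qed

lemma clause_tokens_nonneg_iff:
  assumes "finite m" "finite X" "X \<noteq> {}"
  shows "0 \<le> int (card X - 1) - int (card (m \<inter> X)) + int (card (m \<inter> Y))
    \<longleftrightarrow> (X \<subseteq> m \<longrightarrow> Y \<inter> m \<noteq> {})"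
proof -
  have "card X > 0" using assms(2,3) by (simp add: card_gt_0_iff)
  moreover have "X \<subseteq> m \<longleftrightarrow> card (m \<inter> X) = card X"
    using assms(2) by (metis Int_lower2 card_subset_eq inf.absorb_iff2)
  moreover have "card (m \<inter> X) \<le> card X"
    using assms(2) by (simp add: card_mono)
  moreover have "Y \<inter> m = {} \<longleftrightarrow> card (m \<inter> Y) = 0"
    using assms(1) by (auto simp: Int_commute)
  ultimately show ?thesis by auto
qed

lemma is_configuration_net_of_mset_set_iff:
  assumes "finite m" and nonempty_premises: "\<forall>(X, Y) \<in> T. X \<noteq> {}"
  shows "is_configuration (net_of E T) (mset_set m) \<longleftrightarrow> is_model E T m"
proof -
  have clause_place_iff:
    "0 \<le> int (card X - 1) - int (card (m \<inter> X)) + int (card (m \<inter> Y))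
      \<longleftrightarrow> (X \<subseteq> m \<longrightarrow> Y \<inter> m \<noteq> {})"
    if "(X, Y) \<in> T" "finite X" for X Y
    using clause_tokens_nonneg_iff[OF assms(1) \<open>finite X\<close>] nonempty_premises that(1) by blast
  have finite_premise: "finite X" if "(X, Y) \<in> T" "X \<subseteq> m" for X Y
    using that(2) assms(1) finite_subset by blast
  show ?thesis
    unfolding is_configuration_net_of_iff is_model_def
    using assms(1) clause_place_iff finite_premise
    by (auto simp: count_mset_set' preset_net_of_ClausePlace_mset_set
        postset_net_of_ClausePlace_mset_set)
qed

lemma rooted_premises_nonempty:
  assumes "\<forall>(X, Y) \<in> T. Y \<subseteq> E" and "rooted E T"
  shows "\<forall>(X, Y) \<in> T. X \<noteq> {}"
proof clarify
  fix Y assume "({}, Y) \<in> T"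
  then have "Y \<subseteq> E" "logical_consequence E T ({}, Y)"
    using assms(1) by (auto simp: logical_consequence_def is_model_def)
  then show False using assms(2) by (auto simp: rooted_def)
qed

theorem mainTheorem5:
  fixes E :: "'a set" and T :: "'a clause set"
  assumes "\<forall>(X, Y) \<in> T. X \<subseteq> E \<and> Y \<subseteq> E"
    and "rooted E T"
  shows "{M. is_configuration (net_of E T) M} = mset_set ` {m. finite m \<and> is_model E T m}"
proof -
  have nonempty: "\<forall>(X, Y) \<in> T. X \<noteq> {}"
    using assms by (intro rooted_premises_nonempty) auto
  show ?thesis
  proof (intro set_eqI iffI)
    fix M assume "M \<in> {M. is_configuration (net_of E T) M}"
    then have M: "is_configuration (net_of E T) M" by simp
    then have "M = mset_set (set_mset M)" by (rule configuration_net_of_eq_mset_set)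
    moreover have "is_model E T (set_mset M)"
      using M calculation is_configuration_net_of_mset_set_iff[OF _ nonempty] by force
    ultimately show "M \<in> mset_set ` {m. finite m \<and> is_model E T m}" by blast
  next
    fix M assume "M \<in> mset_set ` {m. finite m \<and> is_model E T m}"
    then show "M \<in> {M. is_configuration (net_of E T) M}"
      using is_configuration_net_of_mset_set_iff[OF _ nonempty] by auto
  qed
qed

end
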